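(* Let $T$ be a metric tree with uniform branch growth. If $T'$ is a metric space quasisymmetrically homeomorphic to $T$, then $T'$ has uniform branch growth.
   Context: A metric tree is a compact connected locally connected metric space with at least two points where any two points are joined by a unique arc. Branches of $T$ at $p$: components of $T\setminus\{p\}$; $p$ is a branch point if there are at least three. For a branch point label the branches $B^1_T(p),B^2_T(p),\dots$ so that diameters are non-increasing. $T$ has uniform branch growth if there is $C\ge1$ with $\mathrm{diam}B^i_T(p)\ge C^{-1}\mathrm{diam}B^3_T(p)$ for all branch points $p$ and all $i\ge3$. A homeomorphism $f:X\to Y$ is quasisymmetric if there is a homeomorphism $\eta:[0,\infty)\to[0,\infty)$ with $d_Y(f(x),f(a))/d_Y(f(x),f(b))\le\eta(d_X(x,a)/d_X(x,b))$ for all $x,a,b$ with $x\ne b$. *)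

theory Defs
  imports "HOL-Analysis.Analysis"
begin

definition metric_tree :: "'a::metric_space set \<Rightarrow> bool" where
  "metric_tree T \<longleftrightarrow> compact T \<and> connected T \<and> locally connected T \<and>
     (\<exists>x\<in>T. \<exists>y\<in>T. x \<noteq> y) \<and>
     (\<forall>x\<in>T. \<forall>y\<in>T. x \<noteq> y \<longrightarrow>
        (\<exists>!A. \<exists>g. arc g \<and> pathstart g = x \<and> pathfinish g = y \<and>
                   path_image g \<subseteq> T \<and> path_image g = A))"

definition branches :: "'a::metric_space set \<Rightarrow> 'a \<Rightarrow> 'a set set" where
  "branches T p = components (T - {p})"

definition branch_point :: "'a::metric_space set \<Rightarrow> 'a \<Rightarrow> bool" where
  "branch_point T p \<longleftrightarrow> p \<in> T \<and>
     (\<exists>B1 B2 B3. B1 \<in> branches T p \<and> B2 \<in> branches T p \<and> B3 \<in> branches T p \<and>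
        B1 \<noteq> B2 \<and> B1 \<noteq> B3 \<and> B2 \<noteq> B3)"

definition branch_labelling ::
    "'a::metric_space set \<Rightarrow> 'a \<Rightarrow> nat set \<Rightarrow> (nat \<Rightarrow> 'a set) \<Rightarrow> bool" where
  "branch_labelling T p I B \<longleftrightarrow>
     (I = {1..} \<or> (\<exists>n. I = {1..n})) \<and>
     bij_betw B I (branches T p) \<and>
     (\<forall>i\<in>I. \<forall>j\<in>I. i \<le> j \<longrightarrow> diameter (B j) \<le> diameter (B i))"

definition uniform_branch_growth :: "'a::metric_space set \<Rightarrow> bool" where
  "uniform_branch_growth T \<longleftrightarrow>
     (\<exists>C::real. C \<ge> 1 \<and>
        (\<forall>p. branch_point T p \<longrightarrow>
           (\<forall>I B. branch_labelling T p I B \<longrightarrow>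
              (\<forall>i\<in>I. i \<ge> 3 \<longrightarrow> diameter (B i) \<ge> diameter (B 3) / C))))"

definition quasisymmetric ::
    "'a::metric_space set \<Rightarrow> 'b::metric_space set \<Rightarrow> ('a \<Rightarrow> 'b) \<Rightarrow> bool" where
  "quasisymmetric X Y f \<longleftrightarrow>
     (\<exists>g. homeomorphism X Y f g) \<and>
     (\<exists>\<eta> \<eta>'. homeomorphism {0::real..} {0..} \<eta> \<eta>' \<and>
        (\<forall>x\<in>X. \<forall>a\<in>X. \<forall>b\<in>X. x \<noteq> b \<longrightarrow>
           dist (f x) (f a) / dist (f x) (f b) \<le> \<eta> (dist x a / dist x b)))"

end

theory Submission
  imports Defs
begin

text \<open>A homeomorphism f maps the branches of T at p bijectively onto the branches of T' at f p.
  A branch A at p lies in the closed ball of radius diam A about p but contains points at distance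
  more than diam A / 3 from p; so if diam A \<le> C diam D for two branches at p, quasisymmetry bounds
  diam f(A) by 2 \<eta>(3C) diam f(D). Uniform branch growth of T says that every branch at a branch
  point has diameter at least diam (B 3) / C, and among the first three branches of T' at f p
  one is the image of a branch of index at least 3 in T, which gives
  diam (B' 3) \<le> 2 \<eta>(3C) diam (B' i). Labellings of the branches of T exist because,
  by compactness and local connectedness, only finitely many branches have diameter \<ge> \<delta>.\<close>

section \<open>Enumerations by nonincreasing size\<close>

lemma nat_set_monotone_enumeration:
  fixes R :: "nat set"
  obtains I :: "nat set" and e :: "nat \<Rightarrow> nat" where "I = {1..} \<or> (\<exists>n. I = {1..n})" and "bij_betw e I R"
    and "\<forall>i\<in>I. \<forall>j\<in>I. i \<le> j \<longrightarrow> e i \<le> e j"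
proof (cases "finite R")
  case True
  have "bij_betw (\<lambda>i. i - 1) {1..card R} {..<card R}"
    by (rule bij_betw_byWitness[where f' = Suc]) auto
  then have "bij_betw (\<lambda>i. enumerate R (i - 1)) {1..card R} R"
    using bij_betw_trans finite_bij_enumerate[OF True] by (fastforce simp: comp_def)
  moreover have "enumerate R (i - 1) \<le> enumerate R (j - 1)"
    if "i \<in> {1..card R}" "j \<in> {1..card R}" "i \<le> j" for i j
    using that True by (cases "i = j") (auto intro: less_imp_le finite_enumerate_mono)
  ultimately show thesis
    by (intro that[of "{1..card R}"]) auto
next
  case False
  have "bij_betw (\<lambda>i. i - 1) {1::nat..} UNIV"
    by (rule bij_betw_byWitness[where f' = Suc]) auto
  then have "bij_betw (\<lambda>i. enumerate R (i - 1)) {1..} R"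
    using bij_betw_trans bij_enumerate[OF False] by (fastforce simp: comp_def)
  moreover have "enumerate R (i - 1) \<le> enumerate R (j - 1)" if "i \<le> j" for i j
    using that False by simp
  ultimately show thesis
    by (intro that[of "{1..}"]) auto
qed

lemma countable_of_finite_superlevel_sets:
  fixes d :: "'x \<Rightarrow> real"
  assumes pos: "\<forall>x\<in>S. 0 < d x" and fin: "\<forall>\<delta>>0. finite {x\<in>S. \<delta> \<le> d x}"
  shows "countable S"
proof -
  have "S = (\<Union>n. {x\<in>S. 1 / Suc n \<le> d x})"
  proof (intro equalityI subsetI)
    fix x assume "x \<in> S"
    then obtain n where "1 / Suc n < d x"
      using pos reals_Archimedean by (metis inverse_eq_divide)
    with \<open>x \<in> S\<close> show "x \<in> (\<Union>n. {x\<in>S. 1 / Suc n \<le> d x})"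
      by (intro UN_I[of n]) auto
  qed auto
  moreover have "countable (\<Union>n. {x\<in>S. 1 / Suc n \<le> d x})"
    using fin by (intro countable_UN[OF countableI_type] countable_finite) auto
  ultimately show ?thesis
    by simp
qed

lemma exists_antitone_rank:
  fixes d :: "'x \<Rightarrow> real"
  assumes pos: "\<forall>x\<in>S. 0 < d x" and fin: "\<forall>\<delta>>0. finite {x\<in>S. \<delta> \<le> d x}"
  obtains r :: "'x \<Rightarrow> nat" where "inj_on r S" and "\<forall>x\<in>S. \<forall>y\<in>S. r x \<le> r y \<longrightarrow> d y \<le> d x"
proof -
  define h where "h = to_nat_on S"
  have h: "inj_on h S"
    unfolding h_def using countable_of_finite_superlevel_sets[OF pos fin] by (rule inj_on_to_nat_on)
  define prec where "prec x y \<longleftrightarrow> d y < d x \<or> (d x = d y \<and> h x < h y)" for x y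
  define r where "r y = card {x\<in>S. prec x y}" for y
  have r_less: "r x < r y" if "x \<in> S" "y \<in> S" "prec x y" for x y
  proof -
    have "{x\<in>S. prec x y} \<subseteq> {x\<in>S. d y \<le> d x}"
      unfolding prec_def by auto
    then have "finite {x\<in>S. prec x y}"
      using fin pos \<open>y \<in> S\<close> finite_subset by blast
    moreover have "{z\<in>S. prec z x} \<subset> {z\<in>S. prec z y}"
      using that unfolding prec_def by auto
    ultimately show ?thesis
      unfolding r_def by (rule psubset_card_mono)
  qed
  have prec_total: "prec x y \<or> prec y x" if "x \<in> S" "y \<in> S" "x \<noteq> y" for x y
    using inj_onD[OF h _ that(1,2)] that(3) unfolding prec_def by force
  show thesis
  proof
    show "inj_on r S"
    proof (rule inj_onI)
      fix x y assume "x \<in> S" "y \<in> S" "r x = r y"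
      then show "x = y"
        using prec_total[of x y] r_less[of x y] r_less[of y x] by auto
    qed
    show "\<forall>x\<in>S. \<forall>y\<in>S. r x \<le> r y \<longrightarrow> d y \<le> d x"
      using r_less unfolding prec_def by (meson leD linorder_not_le)
  qed
qed

lemma exists_nonincreasing_enumeration:
  fixes d :: "'x \<Rightarrow> real"
  assumes "\<forall>x\<in>S. 0 < d x" and "\<forall>\<delta>>0. finite {x\<in>S. \<delta> \<le> d x}"
  obtains I :: "nat set" and e where "I = {1..} \<or> (\<exists>n. I = {1..n})" and "bij_betw e I S"
    and "\<forall>i\<in>I. \<forall>j\<in>I. i \<le> j \<longrightarrow> d (e j) \<le> d (e i)"
proof -
  obtain r :: "'x \<Rightarrow> nat" where r: "inj_on r S" and anti: "\<forall>x\<in>S. \<forall>y\<in>S. r x \<le> r y \<longrightarrow> d y \<le> d x"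
    using exists_antitone_rank assms by blast
  obtain I :: "nat set" and e :: "nat \<Rightarrow> nat"
    where I: "I = {1..} \<or> (\<exists>n. I = {1..n})" and e: "bij_betw e I (r ` S)"
    and mono: "\<forall>i\<in>I. \<forall>j\<in>I. i \<le> j \<longrightarrow> e i \<le> e j"
    using nat_set_monotone_enumeration by blast
  have r_inv: "bij_betw (inv_into S r) (r ` S) S"
    using r by (simp add: bij_betw_imageI bij_betw_inv_into)
  show thesis
  proof (rule that[OF I bij_betw_trans[OF e r_inv]], intro ballI impI)
    fix i j assume "i \<in> I" "j \<in> I" "i \<le> j"
    then show "d ((inv_into S r \<circ> e) j) \<le> d ((inv_into S r \<circ> e) i)"
      using anti mono bij_betw_apply[OF bij_betw_trans[OF e r_inv]] bij_betw_apply[OF e]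
      by (simp add: f_inv_into_f)
  qed
qed

section \<open>Branches of connected, locally connected sets\<close>

lemma diameter_le_of_subset_cball:
  fixes A :: "'a::metric_space set"
  assumes "A \<subseteq> cball p r" and "0 \<le> r"
  shows "diameter A \<le> 2 * r"
proof -
  have "dist x y \<le> 2 * r" if "x \<in> A" "y \<in> A" for x y
  proof -
    have "dist p x \<le> r" and "dist p y \<le> r"
      using that assms by auto
    then show ?thesis
      using dist_triangle3[of x y p] by linarith
  qed
  then show ?thesis
    unfolding diameter_def using assms by (auto intro!: cSUP_least)
qed

lemma exists_far_point:
  fixes A :: "'a::metric_space set"
  assumes "0 < diameter A"
  obtains a where "a \<in> A" and "diameter A < 3 * dist p a"
proof -
  have "\<not> A \<subseteq> cball p (diameter A / 3)"
    using diameter_le_of_subset_cball[of A p "diameter A / 3"] assms by auto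
  then show thesis
    using that by (auto simp: subset_iff)
qed

lemma openin_branch:
  fixes T :: "'a::metric_space set"
  assumes "locally connected T" and "A \<in> components (T - {p})"
  shows "openin (top_of_set T) A"
proof -
  have "openin (top_of_set T) (T - {p})"
    by (simp add: openin_delete)
  with assms show ?thesis
    unfolding locally_connected_open_component by blast
qed

lemma closure_branch:
  fixes T :: "'a::metric_space set"
  assumes "connected T" and "locally connected T" and "p \<in> T"
    and A: "A \<in> components (T - {p})"
  shows "p \<in> closure A"
proof (rule ccontr)
  assume p: "p \<notin> closure A"
  obtain C where "closed C" and "A = (T - {p}) \<inter> C"
    using closedin_component[OF A] by (auto simp: closedin_closed)
  then have "A = T \<inter> closure A"
    using p closure_minimal[of A C] closure_subset[of A] by auto
  then have "closedin (top_of_set T) A"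
    by (metis closedin_closed_Int closed_closure inf_commute)
  then have "A = {} \<or> A = T"
    using assms openin_branch unfolding connected_clopen by blast
  then show False
    using in_components_nonempty[OF A] in_components_subset[OF A] \<open>p \<in> T\<close> by auto
qed

lemma dist_le_diameter_branch:
  fixes T :: "'a::metric_space set"
  assumes "connected T" and "locally connected T" and "bounded T" and "p \<in> T"
    and A: "A \<in> components (T - {p})" and "a \<in> A"
  shows "dist p a \<le> diameter A"
proof -
  have "bounded A"
    using \<open>bounded T\<close> in_components_subset[OF A] bounded_subset by blast
  then have "dist p a \<le> diameter (closure A)"
    using assms closure_branch closure_subset[of A] by (intro diameter_bounded_bound) auto
  with \<open>bounded A\<close> show ?thesis
    by (simp add: diameter_closure)
qed

lemma diameter_branch_pos:
  fixes T :: "'a::metric_space set"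
  assumes "connected T" and "locally connected T" and "bounded T" and "p \<in> T"
    and A: "A \<in> components (T - {p})"
  shows "0 < diameter A"
proof -
  obtain a where "a \<in> A"
    using in_components_nonempty[OF A] by blast
  then have "0 < dist p a"
    using in_components_subset[OF A] by auto
  also have "\<dots> \<le> diameter A"
    using dist_le_diameter_branch assms \<open>a \<in> A\<close> by blast
  finally show ?thesis .
qed

lemma finite_components_meeting_compact:
  assumes "locally connected S" and "compact K" and "K \<subseteq> S"
  shows "finite {c \<in> components S. c \<inter> K \<noteq> {}}"
proof -
  let ?M = "{c \<in> components S. c \<inter> K \<noteq> {}}"
  let ?C = "(\<lambda>c. c \<inter> K) ` ?M"
  \<comment> \<open>?C is an open cover of K by disjoint nonempty sets, so it has no proper subcover.\<close>
  have same_component: "c = c'" if "c \<in> ?M" "c' \<in> ?M" "x \<in> c \<inter> K" "x \<in> c'" for c c' x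
    using that components_eq by blast
  have "openin (top_of_set K) (c \<inter> K)" if "c \<in> components S" for c
    using openin_subtopology_Int[OF openin_components_locally_connected[OF assms(1) that], of K] \<open>K \<subseteq> S\<close>
    by (simp add: subtopology_subtopology Int_absorb1)
  then have open_cover: "\<forall>c\<in>?C. openin (top_of_set K) c"
    by blast
  have cover: "K \<subseteq> \<Union>?C"
  proof
    fix x assume "x \<in> K"
    then have "x \<in> S" and "x \<in> connected_component_set S x"
      using \<open>K \<subseteq> S\<close> by auto
    then have "connected_component_set S x \<in> ?M"
      using \<open>x \<in> K\<close> componentsI[of x S] by blast
    with \<open>x \<in> K\<close> \<open>x \<in> connected_component_set S x\<close> show "x \<in> \<Union>?C"
      by (intro UN_I[of "connected_component_set S x"]) auto
  qed
  obtain D where "D \<subseteq> ?C" and "finite D" and "K \<subseteq> \<Union>D"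
    using compact_eq_openin_cover[THEN iffD1, OF \<open>compact K\<close>, rule_format, OF conjI[OF open_cover cover]]
    by blast
  have "?C \<subseteq> D"
  proof
    fix y assume "y \<in> ?C"
    then obtain c x where c: "c \<in> ?M" "y = c \<inter> K" and x: "x \<in> c \<inter> K"
      by blast
    then obtain c' where "c' \<in> ?M" "c' \<inter> K \<in> D" "x \<in> c'"
      using \<open>K \<subseteq> \<Union>D\<close> \<open>D \<subseteq> ?C\<close> by blast
    with same_component[OF c(1) _ x] c(2) show "y \<in> D"
      by blast
  qed
  then have "finite ?C"
    using \<open>finite D\<close> finite_subset by blast
  moreover have "inj_on (\<lambda>c. c \<inter> K) ?M"
    by (rule inj_onI) (use same_component in blast)
  ultimately show ?thesis
    using finite_imageD by blast
qed

lemma finite_large_branches: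
  fixes T :: "'a::metric_space set"
  assumes "compact T" and "locally connected T" and "0 < \<delta>"
  shows "finite {A \<in> components (T - {p}). \<delta> \<le> diameter A}"
proof -
  let ?K = "T - ball p (\<delta> / 3)"
  have "A \<inter> ?K \<noteq> {}" if A: "A \<in> components (T - {p})" and "\<delta> \<le> diameter A" for A
  proof -
    obtain a where "a \<in> A" and "diameter A < 3 * dist p a"
      using exists_far_point \<open>0 < \<delta>\<close> \<open>\<delta> \<le> diameter A\<close> by (metis order_less_le_trans)
    then have "a \<in> ?K"
      using in_components_subset[OF A] \<open>\<delta> \<le> diameter A\<close> by auto
    with \<open>a \<in> A\<close> show ?thesis
      by blast
  qed
  then have "{A \<in> components (T - {p}). \<delta> \<le> diameter A}
      \<subseteq> {A \<in> components (T - {p}). A \<inter> ?K \<noteq> {}}"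
    by blast
  moreover have "finite {A \<in> components (T - {p}). A \<inter> ?K \<noteq> {}}"
  proof (rule finite_components_meeting_compact)
    show "locally connected (T - {p})"
      using \<open>locally connected T\<close> by (rule locally_open_subset) (simp add: openin_delete)
    show "compact ?K"
      using \<open>compact T\<close> by (simp add: compact_diff)
    show "?K \<subseteq> T - {p}"
      using \<open>0 < \<delta>\<close> by auto
  qed
  ultimately show ?thesis
    by (rule finite_subset)
qed

lemma branch_labelling_exists:
  fixes T :: "'a::metric_space set"
  assumes "compact T" and "connected T" and "locally connected T" and "p \<in> T"
  obtains I B where "branch_labelling T p I B"
proof -
  have "\<forall>A\<in>branches T p. 0 < diameter A"
    using assms diameter_branch_pos compact_imp_bounded unfolding branches_def by blast
  moreover have "\<forall>\<delta>>0. finite {A\<in>branches T p. \<delta> \<le> diameter A}"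
    using assms finite_large_branches unfolding branches_def by blast
  ultimately obtain I :: "nat set" and B where "I = {1..} \<or> (\<exists>n. I = {1..n})"
    and "bij_betw B I (branches T p)" and "\<forall>i\<in>I. \<forall>j\<in>I. i \<le> j \<longrightarrow> diameter (B j) \<le> diameter (B i)"
    by (rule exists_nonincreasing_enumeration)
  then show thesis
    using that unfolding branch_labelling_def by blast
qed

section \<open>Branches under homeomorphisms\<close>

lemma homeomorphism_components_image:
  assumes "homeomorphism S S' f g"
  shows "components S' = image f ` components S"
proof -
  have "components S' = connected_component_set S' ` (f ` S)"
    unfolding components_def using homeomorphism_image1[OF assms] by simp
  also have "\<dots> = (\<lambda>x. f ` connected_component_set S x) ` S"
    using connected_component_set_homeomorphism[OF assms] by (simp add: image_image)
  also have "\<dots> = image f ` components S"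
    unfolding components_def by (simp add: image_image)
  finally show ?thesis .
qed

lemma homeomorphism_image_apply2:
  assumes "homeomorphism S S' f g" and "X \<subseteq> S'"
  shows "f ` g ` X = X"
proof -
  have "(\<lambda>x. f (g x)) ` X = X"
    using \<open>X \<subseteq> S'\<close> homeomorphism_apply2[OF assms(1)] by (auto simp: subset_iff image_iff)
  then show ?thesis
    by (simp add: image_image)
qed

lemma bij_betw_branches_homeomorphism:
  fixes T :: "'a::metric_space set" and T' :: "'b::metric_space set"
  assumes hom: "homeomorphism T T' f g" and "p \<in> T"
  shows "bij_betw (image f) (branches T p) (branches T' (f p))"
proof -
  have inj: "inj_on f T"
    using hom by (metis homeomorphism_apply1 inj_on_inverseI)
  then have "f ` (T - {p}) = T' - {f p}"
    using homeomorphism_image1[OF hom] \<open>p \<in> T\<close> by (auto simp: inj_on_def)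
  then have "homeomorphism (T - {p}) (T' - {f p}) f g"
    using hom by (rule homeomorphism_of_subsets[rotated 3]) auto
  then have "branches T' (f p) = image f ` branches T p"
    unfolding branches_def by (rule homeomorphism_components_image)
  moreover have "inj_on (image f) (branches T p)"
    using inj_on_image_Pow[OF inj] unfolding branches_def
    by (rule inj_on_subset) (auto dest: in_components_subset)
  ultimately show ?thesis
    by (simp add: bij_betw_def)
qed

lemma branch_point_homeomorphism:
  fixes T :: "'a::metric_space set" and T' :: "'b::metric_space set"
  assumes hom: "homeomorphism T T' f g" and "branch_point T p"
  shows "branch_point T' (f p)"
proof -
  obtain B1 B2 B3 where B: "B1 \<in> branches T p" "B2 \<in> branches T p" "B3 \<in> branches T p"
    and "B1 \<noteq> B2" "B1 \<noteq> B3" "B2 \<noteq> B3" and "p \<in> T"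
    using \<open>branch_point T p\<close> unfolding branch_point_def by blast
  moreover note bij = bij_betw_branches_homeomorphism[OF hom \<open>p \<in> T\<close>]
  ultimately have "f ` B1 \<noteq> f ` B2" "f ` B1 \<noteq> f ` B3" "f ` B2 \<noteq> f ` B3"
    using bij_betw_imp_inj_on[OF bij] by (auto dest: inj_onD)
  moreover have "f ` B1 \<in> branches T' (f p)" "f ` B2 \<in> branches T' (f p)" "f ` B3 \<in> branches T' (f p)"
    using bij_betw_apply[OF bij] B by auto
  moreover have "f p \<in> T'"
    using hom \<open>p \<in> T\<close> by (metis homeomorphism_image1 imageI)
  ultimately show ?thesis
    unfolding branch_point_def by blast
qed

lemma branch_labelling_first_three:
  assumes "branch_point T p" and "branch_labelling T p I B"
  shows "{1, 2, 3} \<subseteq> I"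
proof -
  obtain B1 B2 B3 where "{B1, B2, B3} \<subseteq> branches T p" and "B1 \<noteq> B2" "B1 \<noteq> B3" "B2 \<noteq> B3"
    using \<open>branch_point T p\<close> unfolding branch_point_def by auto
  then have "card {B1, B2, B3} = 3"
    by simp
  have bij: "bij_betw B I (branches T p)"
    using \<open>branch_labelling T p I B\<close> unfolding branch_labelling_def by blast
  consider "I = {1..}" | n where "I = {1..n}"
    using \<open>branch_labelling T p I B\<close> unfolding branch_labelling_def by blast
  then show ?thesis
  proof cases
    case (2 n)
    then have "card {B1, B2, B3} \<le> n"
      using \<open>{B1, B2, B3} \<subseteq> branches T p\<close> bij bij_betw_finite bij_betw_same_card
      by (metis card_atLeastAtMost card_mono diff_Suc_1 finite_atLeastAtMost)
    with 2 \<open>card {B1, B2, B3} = 3\<close> show ?thesis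
      by auto
  qed auto
qed

lemma uniform_growth_branch_bound:
  fixes T :: "'a::metric_space set"
  assumes T: "connected T" "locally connected T" "bounded T"
    and "branch_point T p" and lab: "branch_labelling T p I B" and "1 \<le> C"
    and growth: "\<forall>i\<in>I. 3 \<le> i \<longrightarrow> diameter (B 3) / C \<le> diameter (B i)"
    and D: "D \<in> branches T p"
  shows "diameter (B 3) \<le> C * diameter D"
proof -
  have "3 \<in> I"
    using branch_labelling_first_three[OF \<open>branch_point T p\<close> lab] by simp
  obtain i where "i \<in> I" and "D = B i"
    using lab D unfolding branch_labelling_def by (metis bij_betw_imp_surj_on imageE)
  show ?thesis
  proof (cases "3 \<le> i")
    case True
    then have "diameter (B 3) / C \<le> diameter D"
      using growth \<open>i \<in> I\<close> \<open>D = B i\<close> by blast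
    with \<open>1 \<le> C\<close> show ?thesis
      by (simp add: pos_divide_le_eq mult.commute)
  next
    case False
    then have "diameter (B 3) \<le> diameter D"
      using lab \<open>i \<in> I\<close> \<open>3 \<in> I\<close> \<open>D = B i\<close> unfolding branch_labelling_def by auto
    also have "\<dots> \<le> C * diameter D"
      using diameter_branch_pos[OF T] D \<open>1 \<le> C\<close> \<open>branch_point T p\<close>
        mult_right_mono[of 1 C "diameter D"] unfolding branch_point_def branches_def by auto
    finally show ?thesis .
  qed
qed

lemma inj_on_atLeastAtMost_exists_ge:
  fixes \<sigma> :: "nat \<Rightarrow> nat"
  assumes "inj_on \<sigma> {1..n}" and "\<sigma> ` {1..n} \<subseteq> {1..}" and "0 < n"
  obtains k where "k \<in> {1..n}" and "n \<le> \<sigma> k"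
proof (rule ccontr)
  assume "\<not> thesis"
  then have "\<sigma> ` {1..n} \<subseteq> {1..<n}"
    using that assms(2) by force
  then have "card {1..n} \<le> card {1::nat..<n}"
    using assms(1) by (metis card_inj_on_le finite_atLeastLessThan)
  with \<open>0 < n\<close> show False
    by simp
qed

lemma small_branch_among_first_three:
  assumes lab: "branch_labelling T p I e" and "3 \<in> I"
    and lab': "branch_labelling T' p' I' B'" and "{1, 2, 3} \<subseteq> I'"
    and h: "bij_betw h (branches T' p') (branches T p)"
  obtains k where "k \<in> {1, 2, 3}" and "diameter (h (B' k)) \<le> diameter (e 3)"
proof -
  have e: "bij_betw e I (branches T p)" and e_mono: "\<forall>i\<in>I. \<forall>j\<in>I. i \<le> j \<longrightarrow> diameter (e j) \<le> diameter (e i)"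
    and "I \<subseteq> {1..}"
    using lab unfolding branch_labelling_def by auto
  have "bij_betw B' I' (branches T' p')"
    using lab' unfolding branch_labelling_def by blast
  define \<sigma> where "\<sigma> = inv_into I e \<circ> h \<circ> B'"
  have \<sigma>: "bij_betw \<sigma> I' I"
    unfolding \<sigma>_def comp_assoc using bij_betw_trans[OF bij_betw_trans[OF \<open>bij_betw B' I' _\<close> h] bij_betw_inv_into[OF e]] .
  have first_three: "{1..3} = {1, 2, 3::nat}"
    by auto
  then have "{1..3} \<subseteq> I'"
    using \<open>{1, 2, 3} \<subseteq> I'\<close> by simp
  then have "inj_on \<sigma> {1..3}" and "\<sigma> ` {1..3} \<subseteq> {1..}"
    using bij_betw_imp_inj_on[OF \<sigma>] bij_betw_imp_surj_on[OF \<sigma>] \<open>I \<subseteq> {1..}\<close>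
    by (auto intro: inj_on_subset)
  then obtain k where "k \<in> {1..3}" and "3 \<le> \<sigma> k"
    by (rule inj_on_atLeastAtMost_exists_ge) simp
  then have "k \<in> {1, 2, 3}"
    using first_three by blast
  have "e (\<sigma> k) = h (B' k)"
    unfolding \<sigma>_def comp_assoc using \<open>k \<in> {1, 2, 3}\<close> \<open>{1, 2, 3} \<subseteq> I'\<close> bij_betw_apply[OF \<open>bij_betw B' I' _\<close>]
      bij_betw_apply[OF h] bij_betw_imp_surj_on[OF e] by (auto simp: f_inv_into_f)
  moreover have "\<sigma> k \<in> I"
    using bij_betw_apply[OF \<sigma>] \<open>k \<in> {1, 2, 3}\<close> \<open>{1, 2, 3} \<subseteq> I'\<close> by blast
  with e_mono \<open>3 \<in> I\<close> \<open>3 \<le> \<sigma> k\<close> have "diameter (e (\<sigma> k)) \<le> diameter (e 3)"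
    by blast
  ultimately show thesis
    using that \<open>k \<in> {1, 2, 3}\<close> by simp
qed

lemma branch_growth_among_first_three:
  fixes T :: "'a::metric_space set"
  assumes T: "connected T" "locally connected T" "bounded T"
    and "branch_point T p" and lab: "branch_labelling T p I e" and "1 \<le> C"
    and growth: "\<forall>j\<in>I. 3 \<le> j \<longrightarrow> diameter (e 3) / C \<le> diameter (e j)"
    and lab': "branch_labelling T' p' I' B'" and "{1, 2, 3} \<subseteq> I'" and "i \<in> I'"
    and h: "bij_betw h (branches T' p') (branches T p)"
  obtains k where "k \<in> {1, 2, 3}" and "diameter (h (B' k)) \<le> C * diameter (h (B' i))"
proof -
  have "3 \<in> I"
    using branch_labelling_first_three[OF \<open>branch_point T p\<close> lab] by simp
  obtain k where "k \<in> {1, 2, 3}" and "diameter (h (B' k)) \<le> diameter (e 3)"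
    using small_branch_among_first_three[OF lab \<open>3 \<in> I\<close> lab' \<open>{1, 2, 3} \<subseteq> I'\<close> h] .
  moreover have "h (B' i) \<in> branches T p"
    using lab' \<open>i \<in> I'\<close> h unfolding branch_labelling_def by (auto dest: bij_betw_apply)
  then have "diameter (e 3) \<le> C * diameter (h (B' i))"
    by (rule uniform_growth_branch_bound[OF T \<open>branch_point T p\<close> lab \<open>1 \<le> C\<close> growth])
  ultimately show thesis
    using that by (meson order_trans)
qed

section \<open>Quasisymmetric distortion of branches\<close>

lemma quasisymmetric_dist_le:
  fixes f :: "'a::metric_space \<Rightarrow> 'b::metric_space"
  assumes qs: "\<forall>x\<in>X. \<forall>a\<in>X. \<forall>b\<in>X. x \<noteq> b \<longrightarrow>
      dist (f x) (f a) / dist (f x) (f b) \<le> \<eta> (dist x a / dist x b)"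
    and M: "\<forall>t\<in>{0..c}. \<eta> t \<le> M" and "inj_on f X"
    and "p \<in> X" and "a \<in> X" and "b \<in> X" and "p \<noteq> b" and "dist p a \<le> c * dist p b"
  shows "dist (f p) (f a) \<le> M * dist (f p) (f b)"
proof -
  have "dist p a / dist p b \<in> {0..c}"
    using \<open>dist p a \<le> c * dist p b\<close> \<open>p \<noteq> b\<close> by (simp add: divide_le_eq)
  then have "dist (f p) (f a) / dist (f p) (f b) \<le> M"
    using qs M assms(4-7) by (meson order_trans)
  moreover have "0 < dist (f p) (f b)"
    using \<open>inj_on f X\<close> assms(4,6,7) by (auto dest: inj_onD)
  ultimately show ?thesis
    by (simp add: divide_le_eq)
qed

lemma quasisymmetric_diameter_image_le:
  fixes f :: "'a::metric_space \<Rightarrow> 'b::metric_space"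
  assumes qs: "\<forall>x\<in>X. \<forall>a\<in>X. \<forall>b\<in>X. x \<noteq> b \<longrightarrow>
      dist (f x) (f a) / dist (f x) (f b) \<le> \<eta> (dist x a / dist x b)"
    and "inj_on f X" and M: "\<forall>t\<in>{0..3 * C}. \<eta> t \<le> M" and "0 \<le> M" and "0 \<le> C"
    and "p \<in> X" and "A \<subseteq> X" and "B \<subseteq> X"
    and A: "A \<subseteq> cball p (C * diameter B)" and "0 < diameter B"
    and R: "\<forall>b\<in>B. dist (f p) (f b) \<le> R"
  shows "diameter (f ` A) \<le> 2 * M * R"
proof -
  \<comment> \<open>A point of B far from p keeps every ratio dist p a / dist p b with a \<in> A below 3C.\<close>
  obtain b where "b \<in> B" and b_far: "diameter B < 3 * dist p b"
    using exists_far_point \<open>0 < diameter B\<close> by blast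
  then have "b \<in> X" and "p \<noteq> b"
    using \<open>B \<subseteq> X\<close> \<open>0 < diameter B\<close> by auto
  have "0 \<le> R"
    using R \<open>b \<in> B\<close> zero_le_dist order_trans by blast
  have "f ` A \<subseteq> cball (f p) (M * R)"
  proof
    fix y assume "y \<in> f ` A"
    then obtain a where "a \<in> A" and "y = f a"
      by blast
    have "dist p a \<le> C * diameter B"
      using A \<open>a \<in> A\<close> by auto
    also have "\<dots> \<le> 3 * C * dist p b"
      using b_far \<open>0 \<le> C\<close> mult_left_mono[of "diameter B" "3 * dist p b" C] by simp
    finally have "dist (f p) (f a) \<le> M * dist (f p) (f b)"
      using quasisymmetric_dist_le[OF qs M \<open>inj_on f X\<close> \<open>p \<in> X\<close> _ \<open>b \<in> X\<close> \<open>p \<noteq> b\<close>]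
        \<open>a \<in> A\<close> \<open>A \<subseteq> X\<close> by blast
    also have "\<dots> \<le> M * R"
      using R \<open>b \<in> B\<close> \<open>0 \<le> M\<close> by (simp add: mult_left_mono)
    finally show "y \<in> cball (f p) (M * R)"
      using \<open>y = f a\<close> by simp
  qed
  then have "diameter (f ` A) \<le> 2 * (M * R)"
    using \<open>0 \<le> M\<close> \<open>0 \<le> R\<close> by (intro diameter_le_of_subset_cball) auto
  then show ?thesis
    by (simp add: mult.assoc)
qed

lemma quasisymmetric_branch_diameter_le:
  fixes T :: "'a::metric_space set" and T' :: "'b::metric_space set"
  assumes T: "connected T" "locally connected T" "bounded T"
    and T': "connected T'" "locally connected T'" "bounded T'"
    and hom: "homeomorphism T T' f g"
    and qs: "\<forall>x\<in>T. \<forall>a\<in>T. \<forall>b\<in>T. x \<noteq> b \<longrightarrow>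
      dist (f x) (f a) / dist (f x) (f b) \<le> \<eta> (dist x a / dist x b)"
    and M: "\<forall>t\<in>{0..3 * C}. \<eta> t \<le> M" "0 \<le> M" and "0 \<le> C"
    and "p \<in> T" and A: "A \<in> branches T p" and D: "D \<in> branches T p"
    and AD: "diameter A \<le> C * diameter D"
  shows "diameter (f ` A) \<le> 2 * M * diameter (f ` D)"
proof (rule quasisymmetric_diameter_image_le[OF qs _ M \<open>0 \<le> C\<close> \<open>p \<in> T\<close>])
  show "inj_on f T"
    using hom by (metis homeomorphism_apply1 inj_on_inverseI)
  show "A \<subseteq> T" and "D \<subseteq> T"
    using A D unfolding branches_def by (auto dest: in_components_subset)
  show "A \<subseteq> cball p (C * diameter D)"
    using dist_le_diameter_branch[OF T \<open>p \<in> T\<close>] A AD unfolding branches_def by force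
  show "0 < diameter D"
    using diameter_branch_pos[OF T \<open>p \<in> T\<close>] D unfolding branches_def by blast
  have "f ` D \<in> branches T' (f p)" and "f p \<in> T'"
    using bij_betw_apply[OF bij_betw_branches_homeomorphism[OF hom \<open>p \<in> T\<close>] D]
      homeomorphism_image1[OF hom] \<open>p \<in> T\<close> by auto
  then show "\<forall>b\<in>D. dist (f p) (f b) \<le> diameter (f ` D)"
    using dist_le_diameter_branch[OF T'] unfolding branches_def by blast
qed

lemma homeomorphic_compact_connected_locally_connected:
  fixes T :: "'a::metric_space set" and T' :: "'b::metric_space set"
  assumes TT': "T homeomorphic T'" and "compact T" and "connected T" and "locally connected T"
  shows "compact T'" and "connected T'" and "locally connected T'"
  using assms homeomorphic_compactness[OF TT'] homeomorphic_connectedness[OF TT']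
    homeomorphic_locally[OF TT', where P = connected and Q = connected] homeomorphic_connectedness
  by auto

lemma continuous_on_compact_upper_bound:
  fixes \<eta> :: "'a::topological_space \<Rightarrow> real"
  assumes "continuous_on S \<eta>" and "compact S"
  obtains M where "0 \<le> M" and "\<forall>t\<in>S. \<eta> t \<le> M"
proof -
  have "bounded (\<eta> ` S)"
    using assms by (intro compact_imp_bounded compact_continuous_image)
  then obtain M0 where "\<forall>t\<in>S. norm (\<eta> t) \<le> M0"
    unfolding bounded_iff by auto
  then show thesis
    by (intro that[of "max 0 M0"]) force+
qed

lemma quasisymmetric_image_branch_growth:
  fixes T :: "'a::metric_space set" and T' :: "'b::metric_space set"
  assumes T: "compact T" "connected T" "locally connected T"
    and T': "connected T'" "locally connected T'" "bounded T'"
    and hom: "homeomorphism T T' f g"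
    and qs: "\<forall>x\<in>T. \<forall>a\<in>T. \<forall>b\<in>T. x \<noteq> b \<longrightarrow>
      dist (f x) (f a) / dist (f x) (f b) \<le> \<eta> (dist x a / dist x b)"
    and M: "\<forall>t\<in>{0..3 * C}. \<eta> t \<le> M" "0 \<le> M" and "1 \<le> C"
    and growth: "\<forall>p. branch_point T p \<longrightarrow> (\<forall>I B. branch_labelling T p I B \<longrightarrow>
      (\<forall>i\<in>I. 3 \<le> i \<longrightarrow> diameter (B 3) / C \<le> diameter (B i)))"
    and "branch_point T' p'" and lab': "branch_labelling T' p' I' B'" and "i \<in> I'"
  shows "diameter (B' 3) \<le> 2 * M * diameter (B' i)"
proof -
  have "bounded T"
    using \<open>compact T\<close> by (rule compact_imp_bounded)
  define p where "p = g p'"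
  have "p' \<in> T'"
    using \<open>branch_point T' p'\<close> unfolding branch_point_def by blast
  have hom': "homeomorphism T' T g f"
    using hom by (rule homeomorphism_symD)
  have "p \<in> T"
    using hom \<open>p' \<in> T'\<close> unfolding p_def homeomorphism_def by auto
  have bij_g: "bij_betw (image g) (branches T' p') (branches T p)"
    using bij_betw_branches_homeomorphism[OF hom' \<open>p' \<in> T'\<close>] by (simp add: p_def)
  have "branch_point T p"
    using branch_point_homeomorphism[OF hom' \<open>branch_point T' p'\<close>] by (simp add: p_def)
  obtain I e where lab: "branch_labelling T p I e"
    using branch_labelling_exists T \<open>p \<in> T\<close> by blast
  have "{1, 2, 3} \<subseteq> I'"
    using branch_labelling_first_three[OF \<open>branch_point T' p'\<close> lab'] .
  have "\<forall>j\<in>I. 3 \<le> j \<longrightarrow> diameter (e 3) / C \<le> diameter (e j)"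
    using growth \<open>branch_point T p\<close> lab by blast
  then obtain k where "k \<in> {1, 2, 3}" and "diameter (g ` B' k) \<le> C * diameter (g ` B' i)"
    using branch_growth_among_first_three[OF T(2,3) \<open>bounded T\<close> \<open>branch_point T p\<close> lab \<open>1 \<le> C\<close> _
        lab' \<open>{1, 2, 3} \<subseteq> I'\<close> \<open>i \<in> I'\<close> bij_g] by blast
  moreover have "B' k \<in> branches T' p'" and "B' i \<in> branches T' p'"
    using lab' \<open>k \<in> {1, 2, 3}\<close> \<open>{1, 2, 3} \<subseteq> I'\<close> \<open>i \<in> I'\<close> unfolding branch_labelling_def
    by (auto dest: bij_betw_apply)
  ultimately have "diameter (f ` g ` B' k) \<le> 2 * M * diameter (f ` g ` B' i)"
    using \<open>1 \<le> C\<close> quasisymmetric_branch_diameter_le[OF T(2,3) \<open>bounded T\<close> T' hom qs M _ \<open>p \<in> T\<close>]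
      bij_betw_apply[OF bij_g] by simp
  moreover have "B' k \<subseteq> T'" and "B' i \<subseteq> T'"
    using \<open>B' k \<in> branches T' p'\<close> \<open>B' i \<in> branches T' p'\<close> unfolding branches_def
    by (auto dest: in_components_subset)
  moreover have "diameter (B' 3) \<le> diameter (B' k)"
    using lab' \<open>k \<in> {1, 2, 3}\<close> \<open>{1, 2, 3} \<subseteq> I'\<close> unfolding branch_labelling_def by auto
  ultimately show ?thesis
    using homeomorphism_image_apply2[OF hom] by simp
qed

lemma uniform_branch_growthI:
  fixes T :: "'a::metric_space set"
  assumes "bounded T" and "0 \<le> K"
    and bound: "\<And>p I B i. branch_point T p \<Longrightarrow> branch_labelling T p I B \<Longrightarrow> i \<in> I \<Longrightarrow>
      diameter (B 3) \<le> K * diameter (B i)"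
  shows "uniform_branch_growth T"
  unfolding uniform_branch_growth_def
proof (intro exI[of _ "max 1 K"] conjI allI impI ballI)
  fix p I B i
  assume "branch_point T p" and lab: "branch_labelling T p I B" and "i \<in> I"
  then have "diameter (B 3) \<le> K * diameter (B i)"
    by (rule bound)
  also have "\<dots> \<le> max 1 K * diameter (B i)"
  proof (rule mult_right_mono)
    have "B i \<subseteq> T"
      using lab \<open>i \<in> I\<close> unfolding branch_labelling_def branches_def
      by (auto dest: bij_betw_apply in_components_subset)
    then show "0 \<le> diameter (B i)"
      using \<open>bounded T\<close> by (blast intro: diameter_ge_0 bounded_subset)
  qed simp
  finally show "diameter (B 3) / max 1 K \<le> diameter (B i)"
    by (simp add: pos_divide_le_eq mult.commute)
qed simp

theorem lemma2p7:
  fixes T :: "'a::metric_space set" and T' :: "'b::metric_space set"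
    and f :: "'a \<Rightarrow> 'b"
  assumes "metric_tree T"
    and "uniform_branch_growth T"
    and "quasisymmetric T T' f"
  shows "uniform_branch_growth T'"
proof -
  have T: "compact T" "connected T" "locally connected T"
    using \<open>metric_tree T\<close> unfolding metric_tree_def by auto
  obtain C where "1 \<le> C" and growth: "\<forall>p. branch_point T p \<longrightarrow> (\<forall>I B. branch_labelling T p I B \<longrightarrow>
      (\<forall>i\<in>I. 3 \<le> i \<longrightarrow> diameter (B 3) / C \<le> diameter (B i)))"
    using \<open>uniform_branch_growth T\<close> unfolding uniform_branch_growth_def by blast
  obtain g \<eta> \<eta>' where hom: "homeomorphism T T' f g" and "homeomorphism {0..} {0..} \<eta> \<eta>'"
    and qs: "\<forall>x\<in>T. \<forall>a\<in>T. \<forall>b\<in>T. x \<noteq> b \<longrightarrow>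
      dist (f x) (f a) / dist (f x) (f b) \<le> \<eta> (dist x a / dist x b)"
    using \<open>quasisymmetric T T' f\<close> unfolding quasisymmetric_def by blast
  then have "continuous_on {0..3 * C} \<eta>"
    unfolding homeomorphism_def by (auto intro: continuous_on_subset)
  then obtain M where "0 \<le> M" and M: "\<forall>t\<in>{0..3 * C}. \<eta> t \<le> M"
    using compact_Icc by (rule continuous_on_compact_upper_bound)
  have "T homeomorphic T'"
    using hom unfolding homeomorphic_def by blast
  note T' = homeomorphic_compact_connected_locally_connected[OF this T]
  show ?thesis
  proof (rule uniform_branch_growthI)
    show "bounded T'" and "0 \<le> 2 * M"
      using compact_imp_bounded[OF T'(1)] \<open>0 \<le> M\<close> by auto
    show "diameter (B' 3) \<le> 2 * M * diameter (B' i)"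
      if "branch_point T' p'" and "branch_labelling T' p' I' B'" and "i \<in> I'" for p' I' B' i
      using quasisymmetric_image_branch_growth[OF T T'(2,3) \<open>bounded T'\<close> hom qs M \<open>0 \<le> M\<close> \<open>1 \<le> C\<close> growth]
        that by blast
  qed
qed

end
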